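(* Let $\mathcal N$ be an occurrence net, $C$ a cut of $\mathcal N$ and $c\in C$. Then $\mathit{LKC}(c)\subseteq\lfloor C\rfloor$, where $\mathit{LKC}(c)=\{p\in\mathcal P\mid p\not<c\ \text{and}\ t<c\text{ for all }t\in{}^\bullet p\}$.
   Context: A Petri net $(\mathcal P,\mathcal T,\mathcal F,\mathit{In})$ has disjoint places $\mathcal P$ and transitions $\mathcal T$, a flow relation $\mathcal F$ that is a multiset over $(\mathcal P\times\mathcal T)\cup(\mathcal T\times\mathcal P)$, and a finite multiset $\mathit{In}$ over $\mathcal P$; ${}^\bullet x(y)=\mathcal F(y,x)$, $x^\bullet(y)=\mathcal F(x,y)$, and every transition has finite nonempty pre- and postcondition. Let $<$ be the transitive closure of $\{(x,y)\mid\mathcal F(x,y)>0\}$ and $\le$ its reflexive-transitive closure; the causal past of a set $S$ of nodes is $\lfloor S\rfloor=\{y\mid y\le x\text{ for some }x\in S\}$. Nodes $x,y$ are in conflict if there is a place $p\ne x,y$ and distinct transitions $t_1,t_2\in p^\bullet$ with $t_1\le x$ and $t_2\le y$; they are concurrent if neither $x\le y$ nor $y\le x$ nor in conflict. An occurrence net is a Petri net in which pre- and postconditions of transitions are sets, every place has at most one incoming transition, $\mathit{In}=\{p\mid{}^\bullet p=\emptyset\}$, $\mathcal F^{-1}$ is well-founded, and no transition is in conflict with itself. A cut is a maximal set of pairwise concurrent places. *)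

theory Defs
  imports Main "HOL-Library.Multiset"
begin

(* A Petri net over a node type 'a: places P, transitions T (disjoint),
   flow multiset F :: ('a * 'a) => nat (possibly infinite support),
   initial marking In, a finite multiset over P. *)

definition petri_net :: "'a set \<Rightarrow> 'a set \<Rightarrow> ('a \<times> 'a \<Rightarrow> nat) \<Rightarrow> 'a multiset \<Rightarrow> bool" where
  "petri_net P T F In \<longleftrightarrow>
     P \<inter> T = {} \<and>
     (\<forall>x y. F (x, y) > 0 \<longrightarrow> (x \<in> P \<and> y \<in> T) \<or> (x \<in> T \<and> y \<in> P)) \<and>
     set_mset In \<subseteq> P \<and>
     (\<forall>t\<in>T. finite {p. F (p, t) > 0} \<and> {p. F (p, t) > 0} \<noteq> {} \<and>
              finite {p. F (t, p) > 0} \<and> {p. F (t, p) > 0} \<noteq> {})"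

definition flow_rel :: "('a \<times> 'a \<Rightarrow> nat) \<Rightarrow> ('a \<times> 'a) set" where
  "flow_rel F = {(x, y). F (x, y) > 0}"

definition causal_lt :: "('a \<times> 'a \<Rightarrow> nat) \<Rightarrow> 'a \<Rightarrow> 'a \<Rightarrow> bool" where
  "causal_lt F x y \<longleftrightarrow> (x, y) \<in> (flow_rel F)\<^sup>+"

definition causal_le :: "('a \<times> 'a \<Rightarrow> nat) \<Rightarrow> 'a \<Rightarrow> 'a \<Rightarrow> bool" where
  "causal_le F x y \<longleftrightarrow> (x, y) \<in> (flow_rel F)\<^sup>*"

definition causal_past :: "('a \<times> 'a \<Rightarrow> nat) \<Rightarrow> 'a set \<Rightarrow> 'a set" where
  "causal_past F S = {y. \<exists>x\<in>S. causal_le F y x}"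

definition in_conflict :: "'a set \<Rightarrow> 'a set \<Rightarrow> ('a \<times> 'a \<Rightarrow> nat) \<Rightarrow> 'a \<Rightarrow> 'a \<Rightarrow> bool" where
  "in_conflict P T F x y \<longleftrightarrow>
     (\<exists>p\<in>P. p \<noteq> x \<and> p \<noteq> y \<and>
        (\<exists>t1 t2. t1 \<in> T \<and> t2 \<in> T \<and> t1 \<noteq> t2 \<and> F (p, t1) > 0 \<and> F (p, t2) > 0 \<and>
                 causal_le F t1 x \<and> causal_le F t2 y))"

definition concurrent :: "'a set \<Rightarrow> 'a set \<Rightarrow> ('a \<times> 'a \<Rightarrow> nat) \<Rightarrow> 'a \<Rightarrow> 'a \<Rightarrow> bool" where
  "concurrent P T F x y \<longleftrightarrow>
     \<not> causal_le F x y \<and> \<not> causal_le F y x \<and> \<not> in_conflict P T F x y"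

definition occurrence_net :: "'a set \<Rightarrow> 'a set \<Rightarrow> ('a \<times> 'a \<Rightarrow> nat) \<Rightarrow> 'a multiset \<Rightarrow> bool" where
  "occurrence_net P T F In \<longleftrightarrow>
     petri_net P T F In \<and>
     (\<forall>t\<in>T. \<forall>p. F (p, t) \<le> 1 \<and> F (t, p) \<le> 1) \<and>
     (\<forall>p\<in>P. \<forall>t1 t2. F (t1, p) > 0 \<and> F (t2, p) > 0 \<longrightarrow> t1 = t2) \<and>
     (\<forall>p. count In p = (if p \<in> P \<and> (\<forall>t. F (t, p) = 0) then 1 else 0)) \<and>
     wf (flow_rel F) \<and>
     (\<forall>t\<in>T. \<not> in_conflict P T F t t)"

definition pairwise_concurrent :: "'a set \<Rightarrow> 'a set \<Rightarrow> ('a \<times> 'a \<Rightarrow> nat) \<Rightarrow> 'a set \<Rightarrow> bool" where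
  "pairwise_concurrent P T F S \<longleftrightarrow> (\<forall>x\<in>S. \<forall>y\<in>S. x \<noteq> y \<longrightarrow> concurrent P T F x y)"

definition is_cut :: "'a set \<Rightarrow> 'a set \<Rightarrow> ('a \<times> 'a \<Rightarrow> nat) \<Rightarrow> 'a set \<Rightarrow> bool" where
  "is_cut P T F C \<longleftrightarrow>
     C \<subseteq> P \<and> pairwise_concurrent P T F C \<and>
     (\<forall>D. D \<subseteq> P \<and> pairwise_concurrent P T F D \<and> C \<subseteq> D \<longrightarrow> D = C)"

definition LKC :: "'a set \<Rightarrow> ('a \<times> 'a \<Rightarrow> nat) \<Rightarrow> 'a \<Rightarrow> 'a set" where
  "LKC P F c = {p \<in> P. \<not> causal_lt F p c \<and> (\<forall>t. F (t, p) > 0 \<longrightarrow> causal_lt F t c)}"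

end

theory Submission
  imports Defs
begin

text \<open>Take p in LKC(c) outside C. By maximality of the cut, p fails to be concurrent with some
  d \<in> C. If p \<le> d we are done. Otherwise every node strictly below p lies strictly below c, since
  it lies below some transition of the preset of p. So d < p would give d < c, and a conflict
  between p and d, whose witnessing transition below p is then below c, would be inherited by c
  and d. Both are impossible inside a cut: distinct cut elements are concurrent, the flow relation
  is acyclic, and no node of an occurrence net is in conflict with itself, because two conflicting
  transitions below a place lie below its unique input transition.\<close>

lemma in_conflict_sym: "in_conflict P T F x y \<Longrightarrow> in_conflict P T F y x"
  unfolding in_conflict_def by blast

lemma concurrent_sym: "concurrent P T F x y \<Longrightarrow> concurrent P T F y x"
  unfolding concurrent_def by (metis in_conflict_sym)

lemma causal_le_neq_imp_lt: "causal_le F x y \<Longrightarrow> x \<noteq> y \<Longrightarrow> causal_lt F x y"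
  unfolding causal_le_def causal_lt_def by (simp add: rtrancl_eq_or_trancl)

lemma causal_lt_imp_le: "causal_lt F x y \<Longrightarrow> causal_le F x y"
  unfolding causal_le_def causal_lt_def by simp

lemma causal_le_lt_trans: "causal_le F x y \<Longrightarrow> causal_lt F y z \<Longrightarrow> causal_lt F x z"
  unfolding causal_le_def causal_lt_def by (rule rtrancl_trancl_trancl)

lemma flow_causal_le_imp_lt:
  assumes "F (x, y) > 0" and "causal_le F y z"
  shows "causal_lt F x z"
proof -
  have "(x, y) \<in> flow_rel F" using assms(1) by (simp add: flow_rel_def)
  with assms(2) show ?thesis
    unfolding causal_le_def causal_lt_def by (blast intro: rtrancl_into_trancl2)
qed

lemma wf_flow_rel_not_causal_lt_self: "wf (flow_rel F) \<Longrightarrow> \<not> causal_lt F x x"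
  unfolding causal_lt_def using wf_acyclic unfolding acyclic_def by blast

lemma causal_lt_imp_flow_pred:
  assumes "causal_lt F x y"
  obtains z where "causal_le F x z" "F (z, y) > 0"
proof -
  obtain z where "(x, z) \<in> (flow_rel F)\<^sup>*" "(z, y) \<in> flow_rel F"
    using assms unfolding causal_lt_def by (blast dest: tranclD2)
  with that show ?thesis by (simp add: causal_le_def flow_rel_def)
qed

lemma occurrence_net_wf: "occurrence_net P T F In \<Longrightarrow> wf (flow_rel F)"
  unfolding occurrence_net_def by (elim conjE)

lemma occurrence_net_disjoint: "occurrence_net P T F In \<Longrightarrow> P \<inter> T = {}"
  unfolding occurrence_net_def petri_net_def by (elim conjE)

lemma occurrence_net_no_self_conflict:
  assumes occ: "occurrence_net P T F In"
  shows "\<not> in_conflict P T F x x"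
proof
  assume conf: "in_conflict P T F x x"
  have disj: "P \<inter> T = {}"
    and flow: "\<And>u v. F (u, v) > 0 \<Longrightarrow> (u \<in> P \<and> v \<in> T) \<or> (u \<in> T \<and> v \<in> P)"
    and unique_pre: "\<And>p t1 t2. p \<in> P \<Longrightarrow> F (t1, p) > 0 \<Longrightarrow> F (t2, p) > 0 \<Longrightarrow> t1 = t2"
    and no_self: "\<And>t. t \<in> T \<Longrightarrow> \<not> in_conflict P T F t t"
    using occ unfolding occurrence_net_def petri_net_def by blast+
  show False
  proof (cases "x \<in> T")
    case True
    with no_self conf show False by blast
  next
    case False
    from conf obtain q t1 t2 where q: "q \<in> P" "t1 \<in> T" "t2 \<in> T" "t1 \<noteq> t2"
      "F (q, t1) > 0" "F (q, t2) > 0" "causal_le F t1 x" "causal_le F t2 x"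
      unfolding in_conflict_def by blast
    have "t1 \<noteq> x" "t2 \<noteq> x" using q(2,3) False by auto
    hence "causal_lt F t1 x" "causal_lt F t2 x"
      using q(7,8) by (simp_all add: causal_le_neq_imp_lt)
    then obtain z1 z2 where z: "causal_le F t1 z1" "F (z1, x) > 0" "causal_le F t2 z2" "F (z2, x) > 0"
      by (metis causal_lt_imp_flow_pred)
    have "x \<in> P" "z1 \<in> T" using flow[OF z(2)] False by auto
    with unique_pre z have "z1 = z2" by blast
    have "q \<noteq> z1" using q(1) \<open>z1 \<in> T\<close> disj by blast
    with q z \<open>z1 = z2\<close> have "in_conflict P T F z1 z1"
      unfolding in_conflict_def by blast
    with no_self \<open>z1 \<in> T\<close> show False by blast
  qed
qed

lemma in_conflict_transfer_left:
  assumes "wf (flow_rel F)" and "in_conflict P T F x y"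
    and below: "\<And>t. t \<in> T \<Longrightarrow> causal_le F t x \<Longrightarrow> causal_le F t x'"
  shows "in_conflict P T F x' y"
proof -
  from assms(2) obtain q t1 t2 where q: "q \<in> P" "q \<noteq> y" "t1 \<in> T" "t2 \<in> T" "t1 \<noteq> t2"
    "F (q, t1) > 0" "F (q, t2) > 0" "causal_le F t1 x" "causal_le F t2 y"
    unfolding in_conflict_def by blast
  have "causal_le F t1 x'" using below q(3,8) .
  with q(6) have "causal_lt F q x'" by (rule flow_causal_le_imp_lt)
  hence "q \<noteq> x'" using wf_flow_rel_not_causal_lt_self[OF assms(1)] by blast
  show ?thesis
    unfolding in_conflict_def
    using q \<open>q \<noteq> x'\<close> \<open>causal_le F t1 x'\<close> by (intro bexI[of _ q]) auto
qed

lemma LKC_causal_lt: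
  assumes "p \<in> LKC P F c" and "causal_lt F x p"
  shows "causal_lt F x c"
proof -
  obtain z where "causal_le F x z" "F (z, p) > 0"
    using assms(2) by (rule causal_lt_imp_flow_pred)
  moreover have "causal_lt F z c" using assms(1) \<open>F (z, p) > 0\<close> by (simp add: LKC_def)
  ultimately show ?thesis by (blast intro: causal_le_lt_trans)
qed

lemma cut_concurrent:
  assumes "is_cut P T F C" "c \<in> C" "d \<in> C" "c \<noteq> d"
  shows "concurrent P T F c d"
proof -
  have "pairwise_concurrent P T F C" using assms(1) unfolding is_cut_def by (elim conjE)
  with assms(2-4) show ?thesis unfolding pairwise_concurrent_def by blast
qed

lemma cut_not_causal_lt:
  assumes "occurrence_net P T F In" "is_cut P T F C" "c \<in> C" "d \<in> C"
  shows "\<not> causal_lt F c d"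
proof (cases "c = d")
  case True
  with occurrence_net_wf[OF assms(1)] show ?thesis by (simp add: wf_flow_rel_not_causal_lt_self)
next
  case False
  with assms(2-4) have "concurrent P T F c d" by (blast intro: cut_concurrent)
  thus ?thesis unfolding concurrent_def by (metis causal_lt_imp_le)
qed

lemma cut_not_in_conflict:
  assumes "occurrence_net P T F In" "is_cut P T F C" "c \<in> C" "d \<in> C"
  shows "\<not> in_conflict P T F c d"
proof (cases "c = d")
  case True
  with occurrence_net_no_self_conflict[OF assms(1)] show ?thesis by blast
next
  case False
  with assms(2-4) have "concurrent P T F c d" by (blast intro: cut_concurrent)
  thus ?thesis unfolding concurrent_def by blast
qed

lemma cut_maximal:
  assumes cut: "is_cut P T F C" and "p \<in> P" "p \<notin> C"
  obtains d where "d \<in> C" "\<not> concurrent P T F p d"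
proof (rule ccontr)
  assume "\<not> thesis"
  with that have all: "\<And>d. d \<in> C \<Longrightarrow> concurrent P T F p d" by blast
  have "pairwise_concurrent P T F (insert p C)"
    unfolding pairwise_concurrent_def
  proof (intro ballI impI)
    fix x y assume "x \<in> insert p C" "y \<in> insert p C" "x \<noteq> y"
    then consider "x = p" "y \<in> C" | "y = p" "x \<in> C" | "x \<in> C" "y \<in> C"
      by blast
    then show "concurrent P T F x y"
    proof cases
      case 1
      with all show ?thesis by simp
    next
      case 2
      with concurrent_sym[OF all[of x]] show ?thesis by simp
    next
      case 3
      with cut_concurrent[OF cut] \<open>x \<noteq> y\<close> show ?thesis by blast
    qed
  qed
  moreover have "C \<subseteq> P" "insert p C \<subseteq> P" using cut \<open>p \<in> P\<close> by (auto simp: is_cut_def)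
  ultimately have "insert p C = C" using cut unfolding is_cut_def by blast
  with \<open>p \<notin> C\<close> show False by blast
qed

lemma LKC_not_above_cut:
  assumes "occurrence_net P T F In" "is_cut P T F C" "c \<in> C"
    and "p \<in> LKC P F c" "d \<in> C" "p \<notin> C"
  shows "\<not> causal_le F d p"
proof
  assume "causal_le F d p"
  moreover have "d \<noteq> p" using assms(5,6) by blast
  ultimately have "causal_lt F d p" by (rule causal_le_neq_imp_lt)
  hence "causal_lt F d c" by (rule LKC_causal_lt[OF assms(4)])
  with cut_not_causal_lt[OF assms(1,2,5,3)] show False by blast
qed

lemma LKC_not_in_conflict_cut:
  assumes occ: "occurrence_net P T F In" and "is_cut P T F C" "c \<in> C"
    and p: "p \<in> LKC P F c" and "d \<in> C"
  shows "\<not> in_conflict P T F p d"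
proof
  assume "in_conflict P T F p d"
  moreover have "causal_le F t c" if "t \<in> T" "causal_le F t p" for t
  proof -
    have "p \<in> P" using p by (simp add: LKC_def)
    with that(1) occurrence_net_disjoint[OF occ] have "t \<noteq> p" by blast
    with that(2) have "causal_lt F t p" by (rule causal_le_neq_imp_lt)
    thus ?thesis by (intro causal_lt_imp_le LKC_causal_lt[OF p])
  qed
  ultimately have "in_conflict P T F c d"
    by (rule in_conflict_transfer_left[OF occurrence_net_wf[OF occ]])
  with cut_not_in_conflict[OF occ assms(2,3,5)] show False by blast
qed

theorem mainTheorem17:
  fixes P T :: "'a set" and F :: "'a \<times> 'a \<Rightarrow> nat" and In :: "'a multiset"
    and C :: "'a set" and c :: 'a
  assumes "occurrence_net P T F In"
    and "is_cut P T F C"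
    and "c \<in> C"
  shows "LKC P F c \<subseteq> causal_past F C"
proof
  fix p assume p: "p \<in> LKC P F c"
  show "p \<in> causal_past F C"
  proof (cases "p \<in> C")
    case True
    thus ?thesis by (auto simp: causal_past_def causal_le_def)
  next
    case False
    moreover have "p \<in> P" using p by (simp add: LKC_def)
    ultimately obtain d where d: "d \<in> C" "\<not> concurrent P T F p d"
      using cut_maximal[OF assms(2)] by blast
    have "\<not> causal_le F d p" "\<not> in_conflict P T F p d"
      using LKC_not_above_cut[OF assms p d(1) False] LKC_not_in_conflict_cut[OF assms p d(1)] .
    with d(2) have "causal_le F p d" unfolding concurrent_def by blast
    with d(1) show ?thesis by (auto simp: causal_past_def)
  qed
qed

end
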